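(* Let $\alpha\in(0,2)$ and let $J:\mathbb R^d\to\mathbb R$ be bounded measurable with $\int_{r<|z|\le R}z\,J(z)|z|^{-d-1}dz=0$ for all $0<r<R<\infty$. Let $T>0$ and $G_t(x):(0,T)\times\mathbb R^d\to\mathbb R$ be $C^2$ in $x$, and suppose that for each $j=0,1,2$ there are $C_j>0$, $\beta_j\ge0$ with $|\nabla^jG_t(x)|\le C_j\eta_{\alpha,\alpha-\beta_j-j}(t,x)$ for $t\in(0,T)$, $x\in\mathbb R^d$. Then for any $\gamma\in[0,(2-\alpha)\wedge1)$ there is $C=C(\gamma,d,\alpha)>0$ with $$|\widetilde{\mathscr L}^JG_t(x)|\le C\|J\|_\infty\Big(C_0t^{-\beta_0/2}+C_1t^{-\beta_1/2}+C_1^\gamma C_2^{1-\gamma}t^{-\frac{\gamma\beta_1+(1-\gamma)\beta_2}2}\Big)\eta_{\alpha,0}(t,x).$$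
   Context: $\eta_{\alpha,\gamma}(t,x):=t^{\gamma/2}(|x|+t^{1/2})^{-d-\alpha}$. $z^{(\alpha)}:=z1_{\alpha\in(1,2)}+z1_{\{|z|\le1\}}1_{\alpha=1}$; $\widetilde{\mathscr L}^Jf(x):=\int_{\mathbb R^d}(f(x+z)-f(x)-z^{(\alpha)}\cdot\nabla f(x))J(z)|z|^{-d-\alpha}dz$. $d\ge2$. *)

theory Defs
  imports "HOL-Analysis.Analysis"
begin

definition eta :: "real \<Rightarrow> real \<Rightarrow> real \<Rightarrow> 'a::euclidean_space \<Rightarrow> real" where
  "eta \<alpha> \<gamma> t x = t powr (\<gamma> / 2) * (norm x + sqrt t) powr (- real DIM('a) - \<alpha>)"

definition zalpha :: "real \<Rightarrow> 'a::euclidean_space \<Rightarrow> 'a" where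
  "zalpha \<alpha> z = (if 1 < \<alpha> \<and> \<alpha> < 2 then z
                   else if \<alpha> = 1 \<and> norm z \<le> 1 then z else 0)"

definition opLJ :: "real \<Rightarrow> ('a::euclidean_space \<Rightarrow> real) \<Rightarrow> ('a \<Rightarrow> real) \<Rightarrow> 'a \<Rightarrow> real" where
  "opLJ \<alpha> J f x = (LINT z|lborel.
      (f (x + z) - f x - frechet_derivative f (at x) (zalpha \<alpha> z))
        * J z * norm z powr (- real DIM('a) - \<alpha>))"

definition supnorm :: "('a \<Rightarrow> real) \<Rightarrow> real" where
  "supnorm J = (SUP z. \<bar>J z\<bar>)"

end

theory Submission
  imports Defs
begin

text \<open>Put \<open>s = sqrt t\<close> and \<open>w(y) = (|y| + s) powr (-d - \<alpha>)\<close>, so that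
  \<open>eta \<alpha> c t y = s powr c * w(y)\<close> and the hypotheses read \<open>|G| \<le> A\<^sub>0 w\<close>, \<open>|\<nabla>G| \<le> A\<^sub>1 w\<close>,
  \<open>|\<nabla>\<^sup>2G| \<le> A\<^sub>2 w\<close>; on balls of radius \<open>s\<close> the weight varies at most by the factor
  \<open>2 powr (d + \<alpha>)\<close>. After moving the truncation radius of the compensator from 1 to \<open>s\<close>
  (for \<open>\<alpha> = 1\<close> this is free by the cancellation property of \<open>J\<close>), split the integral at
  \<open>|z| = s\<close>. Near the origin the increment is a first-order Taylor remainder (a plain
  difference if \<open>\<alpha> < 1\<close>), and the geometric mean of its bounds through \<open>\<nabla>G\<close> and \<open>\<nabla>\<^sup>2G\<close>
  is of order \<open>|z| powr (2 - \<gamma>)\<close>, integrable against \<open>|z| powr (-d - \<alpha>)\<close> because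
  \<open>\<gamma> < 2 - \<alpha>\<close>. Away from the origin the three terms of the increment are bounded one by
  one, the term \<open>G(x + z)\<close> through a convolution estimate for \<open>w\<close>. Every radial integral
  is a power of \<open>s\<close>, and these powers become the powers of \<open>t\<close> in the statement.\<close>

section \<open>The weight\<close>

definition weight :: "real \<Rightarrow> real \<Rightarrow> 'a::euclidean_space \<Rightarrow> real" where
  "weight a s y = (norm y + s) powr (- real DIM('a) - a)"

lemma weight_nonneg: "0 \<le> weight a s y"
  by (simp add: weight_def)

lemma weight_pos:
  assumes "0 < s"
  shows "0 < weight a s y"
proof -
  have "0 < norm y + s" using assms norm_ge_zero[of y] by linarith
  then show ?thesis unfolding weight_def by simp
qed

lemma measurable_weight [measurable]: "weight a s \<in> borel_measurable borel"
  unfolding weight_def by measurable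

lemma sqrt_powr: "0 \<le> t \<Longrightarrow> sqrt t powr c = t powr (c / 2)"
  by (simp add: powr_half_sqrt[symmetric] powr_powr)

lemma eta_eq_weight: "0 < t \<Longrightarrow> eta \<alpha> c t x = sqrt t powr c * weight \<alpha> (sqrt t) x"
  unfolding eta_def weight_def by (simp add: sqrt_powr)

lemma powr_le_scaled_weight:
  fixes x :: "'a::euclidean_space"
  assumes c: "0 < c" and s: "0 < s" and a: "0 \<le> a" and v: "(norm x + s) / c \<le> v"
  shows "v powr (- real DIM('a) - a) \<le> c powr (real DIM('a) + a) * weight a s x"
proof -
  have x: "0 < norm x + s" using s norm_ge_zero[of x] by linarith
  then have "v powr (- real DIM('a) - a) \<le> ((norm x + s) / c) powr (- real DIM('a) - a)"
    using c a v by (intro powr_mono2') auto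
  also have "\<dots> = (norm x + s) powr (- real DIM('a) - a) / c powr (- real DIM('a) - a)"
    by (rule powr_divide)
  also have "\<dots> = c powr (real DIM('a) + a) * weight a s x"
  proof -
    have "c powr (real DIM('a) + a) = 1 / c powr (- real DIM('a) - a)"
      by (subst powr_minus_divide[symmetric]) (simp add: add.commute)
    then show ?thesis unfolding weight_def by simp
  qed
  finally show ?thesis .
qed

lemma weight_shift_le:
  fixes x y :: "'a::euclidean_space"
  assumes s: "0 < s" and a: "0 \<le> a" and xy: "norm (y - x) \<le> s"
  shows "weight a s y \<le> 2 powr (real DIM('a) + a) * weight a s x"
proof -
  have "norm x \<le> norm y + norm (y - x)" using norm_triangle_ineq4[of y "y - x"] by simp
  then have "norm x + s \<le> 2 * norm y + 2 * s" using s xy norm_ge_zero[of y] by linarith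
  then have "(norm x + s) / 2 \<le> norm y + s" by simp
  then show ?thesis
    unfolding weight_def[of a s y] using s a by (intro powr_le_scaled_weight) auto
qed

section \<open>Radial integrals\<close>

definition outer_const :: "nat \<Rightarrow> real \<Rightarrow> real" where
  "outer_const d a = unit_ball_vol d * 2 ^ d / (1 - 2 powr - a)"

definition inner_const :: "nat \<Rightarrow> real \<Rightarrow> real" where
  "inner_const d q = unit_ball_vol d * 2 powr (real d - q) / (1 - 2 powr - q)"

lemma outer_const_pos: "0 < a \<Longrightarrow> 0 < outer_const d a"
  unfolding outer_const_def using powr_less_one[of 2 "-a"] by (intro divide_pos_pos mult_pos_pos) auto

lemma inner_const_pos: "0 < q \<Longrightarrow> 0 < inner_const d q"
  unfolding inner_const_def using powr_less_one[of 2 "-q"] by (intro divide_pos_pos mult_pos_pos) auto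

lemma ex_power2_bracket:
  fixes y :: real
  assumes "1 \<le> y"
  shows "\<exists>k. 2 ^ k \<le> y \<and> y < 2 ^ Suc k"
proof -
  obtain n where n: "y < (2::real) ^ n" using real_arch_pow[of 2 y] by auto
  define m where "m = (LEAST n. y < (2::real) ^ n)"
  have m: "y < 2 ^ m" unfolding m_def by (rule LeastI[of _ n]) (rule n)
  then obtain k where k: "m = Suc k" using assms by (cases m) auto
  have "\<not> y < 2 ^ k"
  proof
    assume "y < 2 ^ k"
    then have "m \<le> k" unfolding m_def by (rule Least_le)
    with k show False by simp
  qed
  with m k show ?thesis by (intro exI[of _ k]) auto
qed

lemma cball_in_borel [measurable]: "cball (c::'a::euclidean_space) r \<in> sets borel"
  by (simp add: borel_closed)

lemma nn_integral_le_sum_cballs: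
  fixes F :: "'a::euclidean_space \<Rightarrow> real"
  assumes F: "\<And>z. ennreal (F z) \<le> (\<Sum>k. ennreal (c k) * indicator (cball 0 (R k)) z)"
    and c: "\<And>k. 0 \<le> c k" and R: "\<And>k. 0 \<le> R k"
    and S: "(\<lambda>k. c k * (unit_ball_vol DIM('a) * R k ^ DIM('a))) sums S"
  shows "(\<integral>\<^sup>+ z. F z \<partial>lborel) \<le> S"
proof -
  have "(\<integral>\<^sup>+ z. F z \<partial>lborel) \<le> (\<integral>\<^sup>+ z. (\<Sum>k. ennreal (c k) * indicator (cball (0::'a) (R k)) z) \<partial>lborel)"
    using F by (intro nn_integral_mono) auto
  also have "\<dots> = (\<Sum>k. \<integral>\<^sup>+ z. ennreal (c k) * indicator (cball (0::'a) (R k)) z \<partial>lborel)"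
    by (rule nn_integral_suminf) measurable
  also have "\<dots> = (\<Sum>k. ennreal (c k * (unit_ball_vol DIM('a) * R k ^ DIM('a))))"
    using R c by (intro suminf_cong) (simp add: nn_integral_cmult_indicator emeasure_cball ennreal_mult)
  also have "\<dots> = S"
    by (rule suminf_ennreal_eq) (use c R S in auto)
  finally show ?thesis .
qed

lemma le_suminf_ennreal: "(f k :: ennreal) \<le> (\<Sum>k. f k)"
  using sum_le_suminf[of f "{k}"] by (auto intro: summableI)

lemma powr_power2_minus: "((2::real) ^ k) powr (-a) = (2 powr (-a)) ^ k"
  by (simp add: powr_realpow[symmetric] powr_powr mult.commute)

text \<open>Both radial integrals are estimated by decomposing space into dyadic shells
  \<open>2\<^sup>k s < |z| \<le> 2\<^sup>k\<^sup>+\<^sup>1 s\<close> and summing a geometric series.\<close>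

lemma nn_integral_outside_cball_norm_powr:
  assumes s: "0 < s" and a: "0 < a"
  shows "(\<integral>\<^sup>+ z. indicator (- cball 0 s) z * norm z powr (- real DIM('a) - a) \<partial>(lborel :: 'a::euclidean_space measure))
     \<le> outer_const DIM('a) a * s powr - a"
proof -
  define d where "d = DIM('a)"
  define c where "c k = ((2::real) ^ k * s) powr (- real d - a)" for k
  define R where "R k = (2::real) ^ Suc k * s" for k
  show ?thesis
  proof (rule nn_integral_le_sum_cballs[where c = c and R = R])
    fix z :: 'a
    show "ennreal (indicator (- cball 0 s) z * norm z powr (- real DIM('a) - a))
          \<le> (\<Sum>k. ennreal (c k) * indicator (cball 0 (R k)) z)"
    proof (cases "s < norm z")
      case True
      then obtain k where k: "2 ^ k \<le> norm z / s" "norm z / s < 2 ^ Suc k"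
        using ex_power2_bracket[of "norm z / s"] s by auto
      have "norm z powr (- real DIM('a) - a) \<le> c k"
        unfolding c_def d_def using k(1) s a by (intro powr_mono2') (auto simp: le_divide_eq)
      moreover have "norm z \<le> R k"
        using k(2) s unfolding R_def by (simp add: divide_less_eq)
      ultimately have "ennreal (indicator (- cball 0 s) z * norm z powr (- real DIM('a) - a))
          \<le> ennreal (c k) * indicator (cball 0 (R k)) z"
        using True by (simp add: ennreal_leI)
      also have "\<dots> \<le> (\<Sum>k. ennreal (c k) * indicator (cball 0 (R k)) z)"
        by (rule le_suminf_ennreal)
      finally show ?thesis .
    qed (simp add: indicator_def)
  next
    have shell: "c k * (unit_ball_vol DIM('a) * R k ^ DIM('a))
        = (unit_ball_vol DIM('a) * 2 ^ DIM('a) * s powr - a) * (2 powr - a) ^ k" for k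
    proof -
      have "R k ^ DIM('a) = 2 ^ DIM('a) * ((2::real) ^ k * s) powr real d"
        using s by (simp add: R_def d_def powr_realpow power_mult_distrib)
      then have "c k * R k ^ DIM('a) = 2 ^ DIM('a) * ((2::real) ^ k * s) powr - a"
        unfolding c_def by (simp add: powr_add[symmetric])
      then show ?thesis
        using s by (simp add: powr_mult powr_power2_minus algebra_simps)
    qed
    show "(\<lambda>k. c k * (unit_ball_vol DIM('a) * R k ^ DIM('a))) sums (outer_const DIM('a) a * s powr - a)"
      unfolding shell outer_const_def
      using sums_mult[OF geometric_sums[of "2 powr - a"], of "unit_ball_vol DIM('a) * 2 ^ DIM('a) * s powr - a"]
        powr_less_one[of 2 "- a"] a
      by (simp add: field_simps)
  qed (use s in \<open>auto simp: c_def R_def\<close>)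
qed

lemma nn_integral_cball_norm_powr:
  assumes s: "0 < s" and q: "0 < q" "q \<le> real DIM('a)"
  shows "(\<integral>\<^sup>+ z. indicator (cball 0 s) z * norm z powr (q - real DIM('a)) \<partial>(lborel :: 'a::euclidean_space measure))
     \<le> inner_const DIM('a) q * s powr q"
proof -
  define d where "d = DIM('a)"
  define R where "R k = s / (2::real) ^ k" for k
  define c where "c k = (R k / 2) powr (q - real d)" for k
  show ?thesis
  proof (rule nn_integral_le_sum_cballs[where c = c and R = R])
    fix z :: 'a
    show "ennreal (indicator (cball 0 s) z * norm z powr (q - real DIM('a)))
          \<le> (\<Sum>k. ennreal (c k) * indicator (cball 0 (R k)) z)"
    proof (cases "norm z \<le> s \<and> z \<noteq> 0")
      case True
      then have nz: "0 < norm z" by simp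
      obtain k where k: "2 ^ k \<le> s / norm z" "s / norm z < 2 ^ Suc k"
        using ex_power2_bracket[of "s / norm z"] True nz by auto
      have "s < 2 ^ Suc k * norm z" using k(2) nz by (simp add: divide_less_eq)
      then have "norm z powr (q - real DIM('a)) \<le> c k"
        unfolding c_def R_def d_def using s q by (intro powr_mono2') (auto simp: field_simps)
      moreover have "norm z \<le> R k"
        using k(1) nz unfolding R_def by (simp add: le_divide_eq mult.commute)
      ultimately have "ennreal (indicator (cball 0 s) z * norm z powr (q - real DIM('a)))
          \<le> ennreal (c k) * indicator (cball 0 (R k)) z"
        using True by (simp add: ennreal_leI)
      also have "\<dots> \<le> (\<Sum>k. ennreal (c k) * indicator (cball 0 (R k)) z)"
        by (rule le_suminf_ennreal)
      finally show ?thesis .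
    qed (auto simp: indicator_def)
  next
    have shell: "c k * (unit_ball_vol DIM('a) * R k ^ DIM('a))
        = (unit_ball_vol DIM('a) * 2 powr (real DIM('a) - q) * s powr q) * (2 powr - q) ^ k" for k
    proof -
      have R: "0 < R k" using s by (simp add: R_def)
      have "2 powr (real d - q) = 1 / 2 powr (q - real d)"
        by (subst powr_minus_divide[symmetric]) simp
      then have "c k = 2 powr (real d - q) * R k powr (q - real d)"
        using R unfolding c_def by (simp add: powr_divide)
      then have "c k * R k ^ DIM('a) = 2 powr (real d - q) * (R k powr (q - real d) * R k powr real d)"
        using R by (simp add: powr_realpow d_def)
      also have "\<dots> = 2 powr (real d - q) * R k powr q"
        by (simp add: powr_add[symmetric])
      also have "R k powr q = s powr q * ((2::real) ^ k) powr - q"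
        using s unfolding R_def by (simp add: powr_divide powr_minus_divide)
      also have "\<dots> = s powr q * (2 powr - q) ^ k"
        by (simp only: powr_power2_minus)
      finally show ?thesis by (simp add: d_def algebra_simps)
    qed
    show "(\<lambda>k. c k * (unit_ball_vol DIM('a) * R k ^ DIM('a))) sums (inner_const DIM('a) q * s powr q)"
      unfolding shell inner_const_def
      using sums_mult[OF geometric_sums[of "2 powr - q"], of "unit_ball_vol DIM('a) * 2 powr (real DIM('a) - q) * s powr q"]
        powr_less_one[of 2 "- q"] q
      by (simp add: field_simps)
  qed (use s in \<open>auto simp: c_def R_def\<close>)
qed

lemma norm_mult_norm_powr: "norm z * norm z powr m = norm z powr (1 + m)"
  by (cases "z = 0") (simp_all add: powr_add)

lemma nn_integral_cball_le:
  fixes F :: "'a::euclidean_space \<Rightarrow> real"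
  assumes F: "\<And>z. norm z \<le> s \<Longrightarrow> F z \<le> c * norm z powr (q - real DIM('a))"
    and s: "0 < s" and q: "0 < q" "q \<le> real DIM('a)" and c: "0 \<le> c"
  shows "(\<integral>\<^sup>+ z. indicator (cball 0 s) z * F z \<partial>lborel) \<le> c * (inner_const DIM('a) q * s powr q)"
proof -
  have "(\<integral>\<^sup>+ z. indicator (cball 0 s) z * F z \<partial>lborel)
      \<le> (\<integral>\<^sup>+ z. ennreal c * (indicator (cball 0 s) z * norm z powr (q - real DIM('a))) \<partial>(lborel :: 'a measure))"
  proof (rule nn_integral_mono)
    fix z :: 'a
    have "indicator (cball 0 s) z * F z \<le> c * (indicator (cball 0 s) z * norm z powr (q - real DIM('a)))"
      using F[of z] by (simp add: indicator_def)
    then show "ennreal (indicator (cball 0 s) z * F z)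
        \<le> ennreal c * ennreal (indicator (cball 0 s) z * norm z powr (q - real DIM('a)))"
      using c by (simp add: ennreal_leI flip: ennreal_mult)
  qed
  also have "\<dots> = ennreal c * (\<integral>\<^sup>+ z. indicator (cball 0 s) z * norm z powr (q - real DIM('a)) \<partial>(lborel :: 'a measure))"
    by (rule nn_integral_cmult) measurable
  also have "\<dots> \<le> ennreal c * (inner_const DIM('a) q * s powr q)"
    by (intro mult_left_mono nn_integral_cball_norm_powr[OF s q]) auto
  also have "\<dots> = c * (inner_const DIM('a) q * s powr q)"
    by (rule ennreal_mult[symmetric]) (use c s less_imp_le[OF inner_const_pos[OF q(1)]] in auto)
  finally show ?thesis .
qed

lemma nn_integral_le_linear_combination:
  fixes F g h :: "'b \<Rightarrow> real" and a b G H :: real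
  assumes F: "\<And>z. F z \<le> a * g z + b * h z"
    and nonneg: "\<And>z. 0 \<le> g z" "\<And>z. 0 \<le> h z" "0 \<le> a" "0 \<le> b"
    and meas: "g \<in> borel_measurable M" "h \<in> borel_measurable M"
    and g: "(\<integral>\<^sup>+ z. g z \<partial>M) \<le> G" and h: "(\<integral>\<^sup>+ z. h z \<partial>M) \<le> H"
    and GH: "0 \<le> G" "0 \<le> H"
  shows "(\<integral>\<^sup>+ z. F z \<partial>M) \<le> a * G + b * H"
proof -
  have "(\<integral>\<^sup>+ z. F z \<partial>M) \<le> (\<integral>\<^sup>+ z. ennreal a * g z + ennreal b * h z \<partial>M)"
    using F nonneg by (intro nn_integral_mono) (simp add: ennreal_leI flip: ennreal_plus ennreal_mult)
  also have "\<dots> = ennreal a * (\<integral>\<^sup>+ z. g z \<partial>M) + ennreal b * (\<integral>\<^sup>+ z. h z \<partial>M)"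
    using meas by (simp add: nn_integral_add nn_integral_cmult)
  also have "\<dots> \<le> ennreal a * G + ennreal b * H"
    by (intro add_mono mult_left_mono g h) auto
  also have "\<dots> = ennreal (a * G + b * H)"
    using nonneg GH by (simp add: ennreal_plus ennreal_mult)
  finally show ?thesis .
qed

lemma nn_integral_lborel_translate:
  fixes g :: "'a::euclidean_space \<Rightarrow> real"
  assumes "g \<in> borel_measurable borel"
  shows "(\<integral>\<^sup>+ z. g (x + z) \<partial>lborel) = (\<integral>\<^sup>+ y. g y \<partial>lborel)"
proof -
  have "(\<integral>\<^sup>+ y. g y \<partial>lborel) = (\<integral>\<^sup>+ y. g y \<partial>distr lborel borel ((+) x))"
    by (simp add: lborel_distr_plus)
  also have "\<dots> = (\<integral>\<^sup>+ z. g (x + z) \<partial>lborel)"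
    by (rule nn_integral_distr) (use assms in measurable)
  finally show ?thesis by simp
qed

lemma nn_integral_weight:
  assumes s: "0 < s" and a: "0 < a"
  shows "(\<integral>\<^sup>+ y. weight a s y \<partial>(lborel :: 'a::euclidean_space measure))
     \<le> (unit_ball_vol DIM('a) + outer_const DIM('a) a) * s powr - a"
proof -
  define m where "m = - real DIM('a) - a"
  have "(\<integral>\<^sup>+ y. weight a s y \<partial>(lborel :: 'a measure))
      \<le> s powr m * (unit_ball_vol DIM('a) * s ^ DIM('a)) + 1 * (outer_const DIM('a) a * s powr - a)"
  proof (rule nn_integral_le_linear_combination[where g = "indicator (cball 0 s)"
        and h = "\<lambda>y. indicator (- cball 0 s) y * norm y powr m"])
    fix y :: 'a
    show "weight a s y \<le> s powr m * indicator (cball 0 s) y + 1 * (indicator (- cball 0 s) y * norm y powr m)"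
      unfolding weight_def m_def using s a by (cases "norm y \<le> s") (auto intro!: powr_mono2')
    show "(\<integral>\<^sup>+ y. (indicator (cball 0 s) y :: real) \<partial>(lborel :: 'a measure)) \<le> unit_ball_vol DIM('a) * s ^ DIM('a)"
      using s by (simp add: emeasure_cball ennreal_indicator)
    show "(\<integral>\<^sup>+ y. indicator (- cball 0 s) y * norm y powr m \<partial>(lborel :: 'a measure)) \<le> outer_const DIM('a) a * s powr - a"
      unfolding m_def by (rule nn_integral_outside_cball_norm_powr[OF s a])
  qed (use s a outer_const_pos[OF a] in \<open>auto intro: less_imp_le\<close>)
  also have "\<dots> = (unit_ball_vol DIM('a) + outer_const DIM('a) a) * s powr - a"
    using s by (simp add: m_def powr_realpow[symmetric] algebra_simps flip: powr_add)
  finally show ?thesis .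
qed

lemma nn_integral_weight_translate_outside_cball:
  fixes x :: "'a::euclidean_space"
  assumes s: "0 < s" and a: "0 < a"
  shows "(\<integral>\<^sup>+ z. indicator (- cball 0 s) z * weight a s (x + z) * norm z powr (- real DIM('a) - a) \<partial>lborel)
     \<le> (2 powr (real DIM('a) + a) * outer_const DIM('a) a
          + 4 powr (real DIM('a) + a) * (unit_ball_vol DIM('a) + outer_const DIM('a) a)) * s powr - a * weight a s x"
proof -
  define m where "m = - real DIM('a) - a"
  define E where "E = weight a s x"
  have E: "0 \<le> E" unfolding E_def by (rule weight_nonneg)
  have "(\<integral>\<^sup>+ z. indicator (- cball 0 s) z * weight a s (x + z) * norm z powr m \<partial>lborel)
     \<le> (2 powr (real DIM('a) + a) * E) * (outer_const DIM('a) a * s powr - a)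
        + (4 powr (real DIM('a) + a) * E) * ((unit_ball_vol DIM('a) + outer_const DIM('a) a) * s powr - a)"
  proof (rule nn_integral_le_linear_combination[where g = "\<lambda>z. indicator (- cball 0 s) z * norm z powr m"
        and h = "\<lambda>z. weight a s (x + z)"])
    fix z :: 'a
    show "indicator (- cball 0 s) z * weight a s (x + z) * norm z powr m
      \<le> (2 powr (real DIM('a) + a) * E) * (indicator (- cball 0 s) z * norm z powr m)
         + (4 powr (real DIM('a) + a) * E) * weight a s (x + z)"
    proof (cases "s < norm z")
      case False
      then show ?thesis using E by (simp add: weight_nonneg)
    next
      case far: True
      show ?thesis
        \<comment> \<open>either \<open>w(x + z)\<close> or \<open>|z| powr (-d - a)\<close> is comparable to \<open>w(x)\<close>\<close>
      proof (cases "norm x \<le> 2 * norm (x + z)")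
        case True
        then have "weight a s (x + z) \<le> 2 powr (real DIM('a) + a) * E"
          unfolding E_def weight_def[of a s "x + z"] using s a
          by (intro powr_le_scaled_weight) (auto simp: field_simps)
        then have "weight a s (x + z) * norm z powr m \<le> 2 powr (real DIM('a) + a) * E * norm z powr m"
          by (rule mult_right_mono) simp
        moreover have "0 \<le> 4 powr (real DIM('a) + a) * E * weight a s (x + z)"
          using E by (simp add: weight_nonneg)
        ultimately show ?thesis using far by simp
      next
        case False
        have "norm x \<le> norm (x + z) + norm z" using norm_triangle_ineq4[of "x + z" z] by simp
        then have "norm x < 2 * norm z" using False by linarith
        then have "norm x + s \<le> 4 * norm z" using far s by linarith
        then have "(norm x + s) / 4 \<le> norm z" by simp
        then have "norm z powr m \<le> 4 powr (real DIM('a) + a) * E"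
          unfolding E_def m_def using s a by (intro powr_le_scaled_weight) auto
        then have "weight a s (x + z) * norm z powr m \<le> 4 powr (real DIM('a) + a) * E * weight a s (x + z)"
          by (subst mult.commute) (rule mult_right_mono, simp_all add: weight_nonneg)
        moreover have "0 \<le> 2 powr (real DIM('a) + a) * E * norm z powr m"
          using E by simp
        ultimately show ?thesis using far by simp
      qed
    qed
  next
    show "(\<integral>\<^sup>+ z. indicator (- cball 0 s) z * norm z powr m \<partial>(lborel :: 'a measure)) \<le> outer_const DIM('a) a * s powr - a"
      unfolding m_def by (rule nn_integral_outside_cball_norm_powr[OF s a])
    have "(\<integral>\<^sup>+ z. weight a s (x + z) \<partial>lborel) = (\<integral>\<^sup>+ y. weight a s y \<partial>(lborel :: 'a measure))"
      by (rule nn_integral_lborel_translate) measurable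
    then show "(\<integral>\<^sup>+ z. weight a s (x + z) \<partial>lborel) \<le> (unit_ball_vol DIM('a) + outer_const DIM('a) a) * s powr - a"
      using nn_integral_weight[OF s a] by simp
  qed (use E s a less_imp_le[OF outer_const_pos[OF a]] in \<open>auto simp: weight_nonneg intro!: add_nonneg_nonneg mult_nonneg_nonneg\<close>)
  then show ?thesis
    unfolding m_def E_def by (simp add: algebra_simps)
qed

section \<open>Taylor remainders\<close>

lemma powr_interpolation_le:
  fixes a p q \<gamma> :: real
  assumes "a \<le> p" "a \<le> q" "0 \<le> p" "0 \<le> q" "0 \<le> \<gamma>" "\<gamma> \<le> 1"
  shows "a \<le> p powr \<gamma> * q powr (1 - \<gamma>)"
proof (cases "min p q = 0")
  case True
  then have "a \<le> 0" using assms by (auto simp: min_def split: if_splits)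
  then show ?thesis by (meson mult_nonneg_nonneg order_trans powr_ge_zero)
next
  case False
  then have m: "0 < min p q" using assms by linarith
  have "a \<le> min p q" using assms by simp
  also have "\<dots> = min p q powr \<gamma> * min p q powr (1 - \<gamma>)"
    using m by (simp flip: powr_add)
  also have "\<dots> \<le> p powr \<gamma> * q powr (1 - \<gamma>)"
    using m assms by (intro mult_mono powr_mono2) auto
  finally show ?thesis .
qed

lemma powr_interpolation_scaling:
  fixes s C1 C2 :: real
  assumes "0 < s" "0 \<le> C1" "0 \<le> C2"
  shows "(C1 * s powr e1) powr \<gamma> * (C2 * s powr e2) powr (1 - \<gamma>) * s powr e
    = C1 powr \<gamma> * C2 powr (1 - \<gamma>) * s powr (\<gamma> * e1 + (1 - \<gamma>) * e2 + e)"
  using assms by (simp add: powr_mult powr_powr powr_add mult_ac)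

lemma blinfun_differentiable_bound:
  fixes f :: "'a::real_normed_vector \<Rightarrow> 'b::real_normed_vector"
  assumes "\<And>y. y \<in> closed_segment a b \<Longrightarrow> (f has_derivative blinfun_apply (Df y)) (at y)"
    and "\<And>y. y \<in> closed_segment a b \<Longrightarrow> norm (Df y) \<le> B"
  shows "norm (f b - f a) \<le> B * norm (b - a)"
  by (rule differentiable_bound[of "closed_segment a b"])
     (use assms in \<open>auto intro: has_derivative_at_withinI simp: norm_blinfun.rep_eq\<close>)

lemma taylor_remainder_interpolation:
  fixes f :: "'a::real_normed_vector \<Rightarrow> real"
  assumes df: "\<And>y. y \<in> closed_segment x (x + z) \<Longrightarrow> (f has_derivative blinfun_apply (Df y)) (at y)"
    and d2: "\<And>y. y \<in> closed_segment x (x + z) \<Longrightarrow> (Df has_derivative blinfun_apply (D2 y)) (at y)"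
    and B1: "\<And>y. y \<in> closed_segment x (x + z) \<Longrightarrow> norm (Df y) \<le> B1"
    and B2: "\<And>y. y \<in> closed_segment x (x + z) \<Longrightarrow> norm (D2 y) \<le> B2"
    and \<gamma>: "0 \<le> \<gamma>" "\<gamma> \<le> 1"
  shows "\<bar>f (x + z) - f x - Df x z\<bar> \<le> (2 * B1) powr \<gamma> * B2 powr (1 - \<gamma>) * norm z powr (2 - \<gamma>)"
proof -
  define S where "S = closed_segment x (x + z)"
  have x: "x \<in> S" unfolding S_def by simp
  have B1_nonneg: "0 \<le> B1" and B2_nonneg: "0 \<le> B2"
    using B1[of x] B2[of x] x unfolding S_def by (auto intro: order_trans[OF norm_ge_zero])
  define B where "B = (2 * B1) powr \<gamma> * (B2 * norm z) powr (1 - \<gamma>)"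
  have Df_diff: "norm (Df y - Df x) \<le> B" if y: "y \<in> S" for y
    unfolding B_def
  proof (rule powr_interpolation_le)
    show "norm (Df y - Df x) \<le> 2 * B1"
      using norm_triangle_ineq4[of "Df y" "Df x"] B1[of y] B1[of x] x y unfolding S_def by simp
    have "closed_segment x y \<subseteq> S" using x y unfolding S_def by (intro closed_segment_subset) auto
    then have "norm (Df y - Df x) \<le> B2 * norm (y - x)"
      using d2 B2 unfolding S_def by (intro blinfun_differentiable_bound) auto
    also have "\<dots> \<le> B2 * norm z"
      using segment_bound1[of y x "x + z"] y B2_nonneg unfolding S_def by (intro mult_left_mono) auto
    finally show "norm (Df y - Df x) \<le> B2 * norm z" .
  qed (use B1_nonneg B2_nonneg \<gamma> in auto)
  have "norm (f (x + z) - f x - Df x ((x + z) - x)) \<le> norm ((x + z) - x) * B"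
  proof (rule differentiable_bound_linearization[where S = S and f' = "\<lambda>y. blinfun_apply (Df y)"])
    show "x + t *\<^sub>R ((x + z) - x) \<in> S" if "t \<in> {0..1}" for t
      using that unfolding S_def closed_segment_def by (auto simp: algebra_simps)
    show "(f has_derivative blinfun_apply (Df y)) (at y within S)" if "y \<in> S" for y
      using df that unfolding S_def by (auto intro: has_derivative_at_withinI)
    show "onorm (blinfun_apply (Df y) - blinfun_apply (Df x)) \<le> B" if "y \<in> S" for y
      using Df_diff[OF that] by (simp add: norm_blinfun.rep_eq minus_blinfun.rep_eq fun_diff_def)
  qed (rule x)
  then have "\<bar>f (x + z) - f x - Df x z\<bar> \<le> norm z * B" by simp
  also have "norm z * B = (2 * B1) powr \<gamma> * B2 powr (1 - \<gamma>) * norm z powr (2 - \<gamma>)"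
  proof (cases "z = 0")
    case False
    have "norm z powr (2 - \<gamma>) = norm z powr (1 + (1 - \<gamma>))" by simp
    also have "\<dots> = norm z * norm z powr (1 - \<gamma>)"
      by (subst powr_add) (simp add: False)
    finally show ?thesis
      unfolding B_def using B2_nonneg by (simp add: powr_mult algebra_simps)
  qed (use \<gamma> in simp)
  finally show ?thesis .
qed

section \<open>The compensator\<close>

definition compensator :: "real \<Rightarrow> real \<Rightarrow> 'a::real_normed_vector \<Rightarrow> 'a" where
  "compensator \<alpha> r z = (if 1 < \<alpha> \<or> \<alpha> = 1 \<and> norm z \<le> r then z else 0)"

lemma zalpha_eq_compensator: "\<alpha> < 2 \<Longrightarrow> zalpha \<alpha> z = compensator \<alpha> 1 z"
  unfolding zalpha_def compensator_def by auto

lemma measurable_compensator [measurable]: "compensator \<alpha> r \<in> borel_measurable borel"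
  unfolding compensator_def by measurable

lemma annulus_integral_vanishes:
  fixes J :: "'a::euclidean_space \<Rightarrow> real"
  assumes J: "J \<in> borel_measurable lborel" "\<And>z. \<bar>J z\<bar> \<le> Jn"
    and cancel: "\<forall>r R. 0 < r \<longrightarrow> r < R \<longrightarrow>
       (LINT z:{z. r < norm z \<and> norm z \<le> R}|lborel. (J z * norm z powr (- real DIM('a) - 1)) *\<^sub>R z) = 0"
    and r: "0 < r" "r \<le> R"
  shows "set_integrable lborel {z. r < norm z \<and> norm z \<le> R} (\<lambda>z. (J z * norm z powr (- real DIM('a) - 1)) *\<^sub>R z)"
    and "(LINT z:{z. r < norm z \<and> norm z \<le> R}|lborel. (J z * norm z powr (- real DIM('a) - 1)) *\<^sub>R z) = 0"
proof -
  define A where "A = {z::'a. r < norm z \<and> norm z \<le> R}"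
  have [measurable]: "J \<in> borel_measurable borel" using J(1) by simp
  have A [measurable]: "A \<in> sets lborel" unfolding A_def by measurable
  have "emeasure lborel A \<le> emeasure lborel (cball (0::'a) R)"
    unfolding A_def by (intro emeasure_mono) auto
  then have finite: "emeasure lborel A < \<infinity>"
    using emeasure_lborel_cball_finite[of "0::'a" R] by (auto intro: le_less_trans)
  show "set_integrable lborel {z. r < norm z \<and> norm z \<le> R} (\<lambda>z. (J z * norm z powr (- real DIM('a) - 1)) *\<^sub>R z)"
    unfolding A_def[symmetric] set_integrable_def
  proof (rule integrableI_bounded_set_indicator[where B = "\<bar>Jn\<bar> * r powr (- real DIM('a))"])
    show "AE z in lborel. z \<in> A \<longrightarrow> norm ((J z * norm z powr (- real DIM('a) - 1)) *\<^sub>R z) \<le> \<bar>Jn\<bar> * r powr (- real DIM('a))"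
    proof (intro AE_I2 impI)
      fix z assume "z \<in> A"
      then have z: "r < norm z" unfolding A_def by simp
      have "norm ((J z * norm z powr (- real DIM('a) - 1)) *\<^sub>R z) = \<bar>J z\<bar> * norm z powr (- real DIM('a))"
        using z r by (simp add: abs_mult mult.assoc powr_diff)
      also have "\<dots> \<le> \<bar>Jn\<bar> * r powr (- real DIM('a))"
        using J(2)[of z] z r by (intro mult_mono powr_mono2') auto
      finally show "norm ((J z * norm z powr (- real DIM('a) - 1)) *\<^sub>R z) \<le> \<bar>Jn\<bar> * r powr (- real DIM('a))" .
    qed
  qed (use A finite in auto)
  show "(LINT z:{z. r < norm z \<and> norm z \<le> R}|lborel. (J z * norm z powr (- real DIM('a) - 1)) *\<^sub>R z) = 0"
  proof (cases "r = R")
    case True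
    then show ?thesis by (simp add: set_lebesgue_integral_def)
  next
    case False
    then show ?thesis using cancel r by simp
  qed
qed

text \<open>For \<open>\<alpha> = 1\<close> the truncation radius of the compensator may be moved freely: the
  annuli in between contribute nothing by the cancellation hypothesis on \<open>J\<close>.\<close>

lemma compensator_radius_change:
  fixes J :: "'a::euclidean_space \<Rightarrow> real" and L :: "'a \<Rightarrow>\<^sub>L real"
  assumes J: "J \<in> borel_measurable lborel" "\<And>z. \<bar>J z\<bar> \<le> Jn"
    and cancel: "\<forall>r R. 0 < r \<longrightarrow> r < R \<longrightarrow>
       (LINT z:{z. r < norm z \<and> norm z \<le> R}|lborel. (J z * norm z powr (- real DIM('a) - 1)) *\<^sub>R z) = 0"
    and r: "0 < r" "0 < R"
  shows "integrable lborel (\<lambda>z. (L (compensator 1 r z) - L (compensator 1 R z)) * J z * norm z powr (- real DIM('a) - 1))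
    \<and> (LINT z|lborel. (L (compensator 1 r z) - L (compensator 1 R z)) * J z * norm z powr (- real DIM('a) - 1)) = 0"
proof -
  define V where "V r R z = indicator {z::'a. r < norm z \<and> norm z \<le> R} z *\<^sub>R ((J z * norm z powr (- real DIM('a) - 1)) *\<^sub>R z)"
    for r R z
  have difference: "(L (compensator 1 r z) - L (compensator 1 R z)) * J z * norm z powr (- real DIM('a) - 1)
      = (if r \<le> R then - L (V r R z) else L (V R r z))" for z
    unfolding V_def compensator_def
    by (auto simp: indicator_def blinfun.scaleR_right blinfun.zero_right algebra_simps)
  have V: "integrable lborel (\<lambda>z. L (V r R z)) \<and> (LINT z|lborel. L (V r R z)) = 0" if "0 < r" "r \<le> R" for r R
    using annulus_integral_vanishes[OF J cancel that]
      integral_bounded_linear[OF blinfun.bounded_linear_right, of _ "V r R" L]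
    unfolding V_def set_integrable_def set_lebesgue_integral_def
    by (auto intro: integrable_bounded_linear[OF blinfun.bounded_linear_right] simp: blinfun.zero_right)
  show ?thesis
    unfolding difference using V[of r R] V[of R r] r by (cases "r \<le> R") auto
qed

lemma opLJ_eq_integral_compensator:
  fixes f J :: "'a::euclidean_space \<Rightarrow> real" and L :: "'a \<Rightarrow>\<^sub>L real"
  assumes \<alpha>: "0 < \<alpha>" "\<alpha> < 2" and r: "0 < r"
    and J: "J \<in> borel_measurable lborel" "\<And>z. \<bar>J z\<bar> \<le> Jn"
    and cancel: "\<forall>r R. 0 < r \<longrightarrow> r < R \<longrightarrow>
       (LINT z:{z. r < norm z \<and> norm z \<le> R}|lborel. (J z * norm z powr (- real DIM('a) - 1)) *\<^sub>R z) = 0"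
    and df: "(f has_derivative blinfun_apply L) (at x)"
    and int: "integrable lborel (\<lambda>z. (f (x + z) - f x - L (compensator \<alpha> r z)) * J z * norm z powr (- real DIM('a) - \<alpha>))"
  shows "opLJ \<alpha> J f x = (LINT z|lborel. (f (x + z) - f x - L (compensator \<alpha> r z)) * J z * norm z powr (- real DIM('a) - \<alpha>))"
proof -
  define D where "D z = (L (compensator \<alpha> r z) - L (compensator \<alpha> 1 z)) * J z * norm z powr (- real DIM('a) - \<alpha>)" for z
  have D: "integrable lborel D \<and> (LINT z|lborel. D z) = 0"
  proof (cases "\<alpha> = 1")
    case True
    then show ?thesis unfolding D_def using compensator_radius_change[OF J cancel r] by simp
  next
    case False
    then have "D = (\<lambda>z. 0)" unfolding D_def compensator_def by auto
    then show ?thesis by simp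
  qed
  have "opLJ \<alpha> J f x = (LINT z|lborel. (f (x + z) - f x - L (compensator \<alpha> r z)) * J z * norm z powr (- real DIM('a) - \<alpha>) + D z)"
    unfolding opLJ_def frechet_derivative_at[OF df, symmetric] D_def zalpha_eq_compensator[OF \<alpha>(2)]
    by (simp add: algebra_simps)
  also have "\<dots> = (LINT z|lborel. (f (x + z) - f x - L (compensator \<alpha> r z)) * J z * norm z powr (- real DIM('a) - \<alpha>))"
    using int D by simp
  finally show ?thesis .
qed

lemma abs_le_supnorm: "bounded (range J) \<Longrightarrow> \<bar>J z\<bar> \<le> supnorm J"
  unfolding supnorm_def
  by (intro cSUP_upper) (auto simp: bounded_iff intro: bdd_aboveI2)

section \<open>Functions with weighted bounds on two derivatives\<close>

definition near_const :: "nat \<Rightarrow> real \<Rightarrow> real \<Rightarrow> real" where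
  "near_const d \<alpha> \<gamma> = 2 powr (real d + \<alpha>) * (if \<alpha> < 1 then inner_const d (1 - \<alpha>) else 2 * inner_const d (2 - \<gamma> - \<alpha>))"

definition far_const :: "nat \<Rightarrow> real \<Rightarrow> real" where
  "far_const d \<alpha> = 2 powr (real d + \<alpha>) * outer_const d \<alpha>
     + 4 powr (real d + \<alpha>) * (unit_ball_vol d + outer_const d \<alpha>)
     + outer_const d \<alpha> + (if 1 < \<alpha> then outer_const d (\<alpha> - 1) else 0)"

definition opLJ_const :: "nat \<Rightarrow> real \<Rightarrow> real \<Rightarrow> real" where
  "opLJ_const d \<alpha> \<gamma> = near_const d \<alpha> \<gamma> + far_const d \<alpha>"

lemma near_const_nonneg:
  assumes "0 \<le> \<gamma>" "\<gamma> < min (2 - \<alpha>) 1"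
  shows "0 \<le> near_const d \<alpha> \<gamma>"
  unfolding near_const_def using assms inner_const_pos[of "1 - \<alpha>" d] inner_const_pos[of "2 - \<gamma> - \<alpha>" d]
  by auto

lemma far_const_pos:
  assumes "0 < \<alpha>"
  shows "0 < far_const d \<alpha>"
  unfolding far_const_def using outer_const_pos[OF assms, of d] outer_const_pos[of "\<alpha> - 1" d]
  by (auto intro!: add_pos_nonneg add_nonneg_nonneg)

lemma opLJ_const_pos: "0 < \<alpha> \<Longrightarrow> 0 \<le> \<gamma> \<Longrightarrow> \<gamma> < min (2 - \<alpha>) 1 \<Longrightarrow> 0 < opLJ_const d \<alpha> \<gamma>"
  unfolding opLJ_const_def using near_const_nonneg far_const_pos by (meson add_nonneg_pos)

locale weighted_C2 =
  fixes \<alpha> s A0 A1 A2 :: real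
    and f :: "'a::euclidean_space \<Rightarrow> real" and Df :: "'a \<Rightarrow> 'a \<Rightarrow>\<^sub>L real"
    and D2 :: "'a \<Rightarrow> 'a \<Rightarrow>\<^sub>L 'a \<Rightarrow>\<^sub>L real"
  assumes alpha_pos: "0 < \<alpha>" and s_pos: "0 < s"
    and has_derivative_f: "\<And>y. (f has_derivative blinfun_apply (Df y)) (at y)"
    and has_derivative_Df: "\<And>y. (Df has_derivative blinfun_apply (D2 y)) (at y)"
    and f_le: "\<And>y. \<bar>f y\<bar> \<le> A0 * weight \<alpha> s y"
    and Df_le: "\<And>y. norm (Df y) \<le> A1 * weight \<alpha> s y"
    and D2_le: "\<And>y. norm (D2 y) \<le> A2 * weight \<alpha> s y"
begin

definition increment :: "'a \<Rightarrow> 'a \<Rightarrow> real" where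
  "increment x z = f (x + z) - f x - Df x (compensator \<alpha> s z)"

lemma bounds_nonneg: "0 \<le> A0" "0 \<le> A1" "0 \<le> A2"
proof -
  have w: "0 < weight \<alpha> s (0::'a)" by (rule weight_pos[OF s_pos])
  show "0 \<le> A0" using order_trans[OF abs_ge_zero f_le[of 0]] w by (simp add: zero_le_mult_iff)
  show "0 \<le> A1" using order_trans[OF norm_ge_zero Df_le[of 0]] w by (simp add: zero_le_mult_iff)
  show "0 \<le> A2" using order_trans[OF norm_ge_zero D2_le[of 0]] w by (simp add: zero_le_mult_iff)
qed

lemma measurable_increment [measurable]: "increment x \<in> borel_measurable borel"
proof -
  have "continuous_on UNIV f"
    using has_derivative_f by (intro differentiable_imp_continuous_on) (auto simp: differentiable_on_def differentiable_def)
  then have [measurable]: "f \<in> borel_measurable borel" by (rule borel_measurable_continuous_onI)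
  have [measurable]: "blinfun_apply (Df x) \<in> borel_measurable borel"
    by (intro borel_measurable_continuous_onI linear_continuous_on blinfun.bounded_linear_right)
  show ?thesis unfolding increment_def by measurable
qed

lemma weight_on_segment:
  fixes x y z :: 'a
  assumes "norm z \<le> s" "y \<in> closed_segment x (x + z)"
  shows "weight \<alpha> s y \<le> 2 powr (real DIM('a) + \<alpha>) * weight \<alpha> s x"
  by (rule weight_shift_le) (use segment_bound1[OF assms(2)] assms(1) s_pos alpha_pos in auto)

lemma derivatives_le_on_segment:
  assumes "norm z \<le> s" "y \<in> closed_segment x (x + z)"
  shows "norm (Df y) \<le> A1 * (2 powr (real DIM('a) + \<alpha>) * weight \<alpha> s x)"
    and "norm (D2 y) \<le> A2 * (2 powr (real DIM('a) + \<alpha>) * weight \<alpha> s x)"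
  using order_trans[OF Df_le mult_left_mono[OF weight_on_segment[OF assms] bounds_nonneg(2)]]
    order_trans[OF D2_le mult_left_mono[OF weight_on_segment[OF assms] bounds_nonneg(3)]] .

lemma increment_le_first_order:
  assumes "norm z \<le> s" "\<alpha> < 1"
  shows "\<bar>increment x z\<bar> \<le> 2 powr (real DIM('a) + \<alpha>) * A1 * weight \<alpha> s x * norm z"
proof -
  have "\<bar>increment x z\<bar> = norm (f (x + z) - f x)"
    unfolding increment_def compensator_def using assms by simp
  also have "\<dots> \<le> A1 * (2 powr (real DIM('a) + \<alpha>) * weight \<alpha> s x) * norm ((x + z) - x)"
    by (rule blinfun_differentiable_bound[OF has_derivative_f derivatives_le_on_segment(1)[OF assms(1)]])
  finally show ?thesis by (simp add: mult_ac)
qed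

lemma increment_le_second_order:
  assumes "norm z \<le> s" "1 \<le> \<alpha>" "0 \<le> \<gamma>" "\<gamma> \<le> 1"
  shows "\<bar>increment x z\<bar>
    \<le> 2 * 2 powr (real DIM('a) + \<alpha>) * A1 powr \<gamma> * A2 powr (1 - \<gamma>) * weight \<alpha> s x * norm z powr (2 - \<gamma>)"
proof -
  define P where "P = 2 powr (real DIM('a) + \<alpha>) * weight \<alpha> s x"
  have P: "0 < P" unfolding P_def by (intro mult_pos_pos) (simp_all add: weight_pos[OF s_pos])
  have "\<bar>increment x z\<bar> = \<bar>f (x + z) - f x - Df x z\<bar>"
    unfolding increment_def compensator_def using assms by auto
  also have "\<dots> \<le> (2 * (A1 * P)) powr \<gamma> * (A2 * P) powr (1 - \<gamma>) * norm z powr (2 - \<gamma>)"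
  proof (rule taylor_remainder_interpolation[OF has_derivative_f has_derivative_Df _ _ assms(3,4)])
    fix y assume y: "y \<in> closed_segment x (x + z)"
    show "norm (Df y) \<le> A1 * P" "norm (D2 y) \<le> A2 * P"
      unfolding P_def by (rule derivatives_le_on_segment[OF assms(1) y])+
  qed
  also have "(2 * (A1 * P)) powr \<gamma> * (A2 * P) powr (1 - \<gamma>) = 2 powr \<gamma> * P * (A1 powr \<gamma> * A2 powr (1 - \<gamma>))"
    using P bounds_nonneg by (simp add: powr_mult mult_ac flip: powr_add)
  also have "\<dots> \<le> 2 * P * (A1 powr \<gamma> * A2 powr (1 - \<gamma>))"
    using P assms(4) powr_mono[of \<gamma> 1 2] by (intro mult_right_mono) auto
  finally show ?thesis
    unfolding P_def by (simp add: mult_right_mono mult_ac)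
qed

lemma increment_le_far:
  assumes "s < norm z"
  shows "\<bar>increment x z\<bar>
    \<le> A0 * weight \<alpha> s (x + z) + A0 * weight \<alpha> s x + (if 1 < \<alpha> then A1 * weight \<alpha> s x * norm z else 0)"
proof -
  have "\<bar>Df x (compensator \<alpha> s z)\<bar> \<le> (if 1 < \<alpha> then A1 * weight \<alpha> s x * norm z else 0)"
  proof (cases "1 < \<alpha>")
    case True
    have "\<bar>Df x z\<bar> \<le> norm (Df x) * norm z" using norm_blinfun[of "Df x" z] by simp
    also have "\<dots> \<le> A1 * weight \<alpha> s x * norm z" using Df_le[of x] by (intro mult_right_mono) auto
    finally show ?thesis using True by (simp add: compensator_def)
  qed (use assms in \<open>auto simp: compensator_def\<close>)
  then show ?thesis
    unfolding increment_def using f_le[of "x + z"] f_le[of x] by linarith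
qed

lemma nn_integral_near_le:
  assumes \<gamma>: "0 \<le> \<gamma>" "\<gamma> < min (2 - \<alpha>) 1" and dim: "2 \<le> DIM('a)"
  shows "(\<integral>\<^sup>+ z. indicator (cball 0 s) z * (\<bar>increment x z\<bar> * norm z powr (- real DIM('a) - \<alpha>)) \<partial>lborel)
    \<le> near_const DIM('a) \<alpha> \<gamma> * (A1 * s powr (1 - \<alpha>) + A1 powr \<gamma> * A2 powr (1 - \<gamma>) * s powr (2 - \<gamma> - \<alpha>))
        * weight \<alpha> s x"
proof -
  define P where "P = 2 powr (real DIM('a) + \<alpha>) * weight \<alpha> s x"
  have P: "0 \<le> P" unfolding P_def by (simp add: weight_nonneg)
  have d: "2 \<le> real DIM('a)" using dim by simp
  have X: "0 \<le> A1 * s powr (1 - \<alpha>)" "0 \<le> A1 powr \<gamma> * A2 powr (1 - \<gamma>) * s powr (2 - \<gamma> - \<alpha>)"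
    using bounds_nonneg by auto
  have N: "0 \<le> near_const DIM('a) \<alpha> \<gamma>" using near_const_nonneg[OF \<gamma>] .
  show ?thesis
  proof (cases "\<alpha> < 1")
    case True
    have "(\<integral>\<^sup>+ z. indicator (cball 0 s) z * (\<bar>increment x z\<bar> * norm z powr (- real DIM('a) - \<alpha>)) \<partial>lborel)
        \<le> (P * A1) * (inner_const DIM('a) (1 - \<alpha>) * s powr (1 - \<alpha>))"
    proof (rule nn_integral_cball_le)
      fix z :: 'a assume z: "norm z \<le> s"
      have "\<bar>increment x z\<bar> * norm z powr (- real DIM('a) - \<alpha>)
          \<le> (P * A1 * norm z) * norm z powr (- real DIM('a) - \<alpha>)"
        using increment_le_first_order[OF z True] unfolding P_def by (intro mult_right_mono) (auto simp: mult_ac)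
      also have "\<dots> = P * A1 * norm z powr (1 - \<alpha> - real DIM('a))"
        by (simp only: mult.assoc norm_mult_norm_powr) (simp add: algebra_simps)
      finally show "\<bar>increment x z\<bar> * norm z powr (- real DIM('a) - \<alpha>) \<le> P * A1 * norm z powr (1 - \<alpha> - real DIM('a))" .
    qed (use s_pos True dim alpha_pos P bounds_nonneg in auto)
    also have "\<dots> \<le> near_const DIM('a) \<alpha> \<gamma> * (A1 * s powr (1 - \<alpha>)) * weight \<alpha> s x"
      using True unfolding P_def near_const_def by (simp add: mult_ac)
    also have "\<dots> \<le> near_const DIM('a) \<alpha> \<gamma> * (A1 * s powr (1 - \<alpha>) + A1 powr \<gamma> * A2 powr (1 - \<gamma>) * s powr (2 - \<gamma> - \<alpha>))
        * weight \<alpha> s x"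
      using N X by (intro ennreal_leI mult_right_mono mult_left_mono) (auto simp: weight_nonneg)
    finally show ?thesis .
  next
    case False
    define B where "B = 2 * P * A1 powr \<gamma> * A2 powr (1 - \<gamma>)"
    have "(\<integral>\<^sup>+ z. indicator (cball 0 s) z * (\<bar>increment x z\<bar> * norm z powr (- real DIM('a) - \<alpha>)) \<partial>lborel)
        \<le> B * (inner_const DIM('a) (2 - \<gamma> - \<alpha>) * s powr (2 - \<gamma> - \<alpha>))"
    proof (rule nn_integral_cball_le)
      fix z :: 'a assume z: "norm z \<le> s"
      have "\<bar>increment x z\<bar> * norm z powr (- real DIM('a) - \<alpha>)
          \<le> (B * norm z powr (2 - \<gamma>)) * norm z powr (- real DIM('a) - \<alpha>)"
        using increment_le_second_order[OF z _ \<gamma>(1)] False \<gamma> unfolding B_def P_def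
        by (intro mult_right_mono) (auto simp: mult_ac)
      also have "\<dots> = B * norm z powr (2 - \<gamma> - \<alpha> - real DIM('a))"
        by (simp only: mult.assoc powr_add[symmetric]) (simp add: algebra_simps)
      finally show "\<bar>increment x z\<bar> * norm z powr (- real DIM('a) - \<alpha>) \<le> B * norm z powr (2 - \<gamma> - \<alpha> - real DIM('a))" .
    qed (use s_pos \<gamma> d alpha_pos P bounds_nonneg in \<open>auto simp: B_def\<close>)
    also have "\<dots> = near_const DIM('a) \<alpha> \<gamma> * (A1 powr \<gamma> * A2 powr (1 - \<gamma>) * s powr (2 - \<gamma> - \<alpha>)) * weight \<alpha> s x"
      using False unfolding B_def P_def near_const_def by (simp add: mult_ac)
    also have "\<dots> \<le> near_const DIM('a) \<alpha> \<gamma> * (A1 * s powr (1 - \<alpha>) + A1 powr \<gamma> * A2 powr (1 - \<gamma>) * s powr (2 - \<gamma> - \<alpha>))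
        * weight \<alpha> s x"
      using N X by (intro ennreal_leI mult_right_mono mult_left_mono) (auto simp: weight_nonneg)
    finally show ?thesis .
  qed
qed


lemma nn_integral_far_le:
  "(\<integral>\<^sup>+ z. indicator (- cball 0 s) z * (\<bar>increment x z\<bar> * norm z powr (- real DIM('a) - \<alpha>)) \<partial>lborel)
    \<le> far_const DIM('a) \<alpha> * (A0 * s powr - \<alpha> + A1 * s powr (1 - \<alpha>)) * weight \<alpha> s x"
proof -
  define m where "m = - real DIM('a) - \<alpha>"
  define E where "E = weight \<alpha> s x"
  define g where "g z = indicator (- cball 0 s) z * norm z powr m" for z :: 'a
  define g' where "g' z = (if 1 < \<alpha> then indicator (- cball 0 s) z * norm z powr (- real DIM('a) - (\<alpha> - 1)) else 0)"
    for z :: 'a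
  define B' where "B' = (if 1 < \<alpha> then outer_const DIM('a) (\<alpha> - 1) * s powr - (\<alpha> - 1) else 0)"
  define K where "K = 2 powr (real DIM('a) + \<alpha>) * outer_const DIM('a) \<alpha>
    + 4 powr (real DIM('a) + \<alpha>) * (unit_ball_vol DIM('a) + outer_const DIM('a) \<alpha>)"
  have [measurable]: "g \<in> borel_measurable borel" "g' \<in> borel_measurable borel"
    unfolding g_def g'_def by measurable
  have E: "0 \<le> E" unfolding E_def by (rule weight_nonneg)
  have A: "0 \<le> A0" "0 \<le> A1" by (rule bounds_nonneg)+
  have outer: "0 \<le> outer_const DIM('a) \<alpha>" "1 < \<alpha> \<Longrightarrow> 0 \<le> outer_const DIM('a) (\<alpha> - 1)"
    using outer_const_pos[OF alpha_pos] outer_const_pos[of "\<alpha> - 1"] by (auto intro: less_imp_le)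
  have K: "0 \<le> K" unfolding K_def using outer by simp
  have B': "0 \<le> B'" unfolding B'_def using outer by simp
  have tail: "(\<integral>\<^sup>+ z. (A0 * E) * g z + (A1 * E) * g' z \<partial>lborel)
      \<le> (A0 * E) * (outer_const DIM('a) \<alpha> * s powr - \<alpha>) + (A1 * E) * B'"
  proof (rule nn_integral_le_linear_combination[where g = g and h = g'])
    show "(\<integral>\<^sup>+ z. g z \<partial>lborel) \<le> outer_const DIM('a) \<alpha> * s powr - \<alpha>"
      unfolding g_def m_def by (rule nn_integral_outside_cball_norm_powr[OF s_pos alpha_pos])
    show "(\<integral>\<^sup>+ z. g' z \<partial>lborel) \<le> B'"
      unfolding g'_def B'_def using nn_integral_outside_cball_norm_powr[OF s_pos, of "\<alpha> - 1", where 'a = 'a]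
      by auto
  qed (use A E outer B' in \<open>auto simp: g_def g'_def\<close>)
  have integral: "(\<integral>\<^sup>+ z. indicator (- cball 0 s) z * (\<bar>increment x z\<bar> * norm z powr m) \<partial>lborel)
      \<le> A0 * (K * s powr - \<alpha> * E) + 1 * ((A0 * E) * (outer_const DIM('a) \<alpha> * s powr - \<alpha>) + (A1 * E) * B')"
  proof (rule nn_integral_le_linear_combination[where g = "\<lambda>z. indicator (- cball 0 s) z * weight \<alpha> s (x + z) * norm z powr m"
        and h = "\<lambda>z. (A0 * E) * g z + (A1 * E) * g' z"])
    fix z :: 'a
    show "indicator (- cball 0 s) z * (\<bar>increment x z\<bar> * norm z powr m)
      \<le> A0 * (indicator (- cball 0 s) z * weight \<alpha> s (x + z) * norm z powr m) + 1 * ((A0 * E) * g z + (A1 * E) * g' z)"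
    proof (cases "s < norm z")
      case True
      have "\<bar>increment x z\<bar> * norm z powr m
          \<le> (A0 * weight \<alpha> s (x + z) + A0 * E + (if 1 < \<alpha> then A1 * E * norm z else 0)) * norm z powr m"
        using increment_le_far[OF True] unfolding E_def by (intro mult_right_mono) auto
      also have "\<dots> = A0 * weight \<alpha> s (x + z) * norm z powr m + (A0 * E) * g z + (A1 * E) * g' z"
        using True norm_mult_norm_powr[of z m] unfolding g_def g'_def m_def
        by (simp add: algebra_simps)
      finally show ?thesis using True by simp
    qed (use A E in \<open>simp add: g_def g'_def\<close>)
  next
    show "(\<integral>\<^sup>+ z. indicator (- cball 0 s) z * weight \<alpha> s (x + z) * norm z powr m \<partial>lborel) \<le> K * s powr - \<alpha> * E"
      unfolding K_def E_def m_def by (rule nn_integral_weight_translate_outside_cball[OF s_pos alpha_pos])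
  qed (use A E K B' tail outer in \<open>auto simp: g_def g'_def weight_nonneg intro!: add_nonneg_nonneg mult_nonneg_nonneg\<close>)
  have collect: "A0 * (K * s powr - \<alpha> * E) + 1 * ((A0 * E) * (outer_const DIM('a) \<alpha> * s powr - \<alpha>) + (A1 * E) * B')
      \<le> far_const DIM('a) \<alpha> * (A0 * s powr - \<alpha> + A1 * s powr (1 - \<alpha>)) * E"
  proof -
    have "far_const DIM('a) \<alpha> * (A0 * s powr - \<alpha> + A1 * s powr (1 - \<alpha>)) * E
        = A0 * (K * s powr - \<alpha> * E) + (A0 * E) * (outer_const DIM('a) \<alpha> * s powr - \<alpha>) + (A1 * E) * B'
          + ((K + outer_const DIM('a) \<alpha>) * (A1 * s powr (1 - \<alpha>) * E)
             + (if 1 < \<alpha> then outer_const DIM('a) (\<alpha> - 1) * (A0 * s powr - \<alpha> * E) else 0))"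
      unfolding far_const_def K_def B'_def by (simp add: algebra_simps)
    moreover have "0 \<le> (K + outer_const DIM('a) \<alpha>) * (A1 * s powr (1 - \<alpha>) * E)
             + (if 1 < \<alpha> then outer_const DIM('a) (\<alpha> - 1) * (A0 * s powr - \<alpha> * E) else 0)"
      using A E K outer by auto
    ultimately show ?thesis by simp
  qed
  show ?thesis using order_trans[OF integral ennreal_leI[OF collect]] unfolding m_def E_def .
qed

lemma nn_integral_increment_le:
  assumes \<gamma>: "0 \<le> \<gamma>" "\<gamma> < min (2 - \<alpha>) 1" and dim: "2 \<le> DIM('a)"
  shows "(\<integral>\<^sup>+ z. \<bar>increment x z\<bar> * norm z powr (- real DIM('a) - \<alpha>) \<partial>lborel)
    \<le> opLJ_const DIM('a) \<alpha> \<gamma> * (A0 * s powr - \<alpha> + A1 * s powr (1 - \<alpha>)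
        + A1 powr \<gamma> * A2 powr (1 - \<gamma>) * s powr (2 - \<gamma> - \<alpha>)) * weight \<alpha> s x"
proof -
  define X0 where "X0 = A0 * s powr - \<alpha>"
  define X1 where "X1 = A1 * s powr (1 - \<alpha>)"
  define X2 where "X2 = A1 powr \<gamma> * A2 powr (1 - \<gamma>) * s powr (2 - \<gamma> - \<alpha>)"
  define E where "E = weight \<alpha> s x"
  define N where "N = near_const DIM('a) \<alpha> \<gamma>"
  define F where "F = far_const DIM('a) \<alpha>"
  have nonneg: "0 \<le> X0" "0 \<le> X1" "0 \<le> X2" "0 \<le> E" "0 \<le> N" "0 \<le> F"
    unfolding X0_def X1_def X2_def E_def N_def F_def
    using bounds_nonneg near_const_nonneg[OF \<gamma>] less_imp_le[OF far_const_pos[OF alpha_pos]]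
    by (auto simp: weight_nonneg)
  have "(\<integral>\<^sup>+ z. \<bar>increment x z\<bar> * norm z powr (- real DIM('a) - \<alpha>) \<partial>lborel)
      \<le> 1 * (N * (X1 + X2) * E) + 1 * (F * (X0 + X1) * E)"
  proof (rule nn_integral_le_linear_combination)
    show "(\<integral>\<^sup>+ z. indicator (cball 0 s) z * (\<bar>increment x z\<bar> * norm z powr (- real DIM('a) - \<alpha>)) \<partial>lborel)
        \<le> N * (X1 + X2) * E"
      unfolding N_def X1_def X2_def E_def by (rule nn_integral_near_le[OF \<gamma> dim])
    show "(\<integral>\<^sup>+ z. indicator (- cball 0 s) z * (\<bar>increment x z\<bar> * norm z powr (- real DIM('a) - \<alpha>)) \<partial>lborel)
        \<le> F * (X0 + X1) * E"
      unfolding F_def X0_def X1_def E_def by (rule nn_integral_far_le)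
  qed (use nonneg in \<open>auto simp: indicator_def\<close>)
  also have "1 * (N * (X1 + X2) * E) + 1 * (F * (X0 + X1) * E) \<le> (N + F) * (X0 + X1 + X2) * E"
    using nonneg by (simp add: algebra_simps add_increasing2)
  finally show ?thesis
    unfolding opLJ_const_def N_def F_def X0_def X1_def X2_def E_def by (simp add: ennreal_leI)
qed

lemma abs_opLJ_le:
  fixes J :: "'a \<Rightarrow> real"
  assumes \<alpha>: "\<alpha> < 2" and \<gamma>: "0 \<le> \<gamma>" "\<gamma> < min (2 - \<alpha>) 1" and dim: "2 \<le> DIM('a)"
    and J: "J \<in> borel_measurable lborel" "\<And>z. \<bar>J z\<bar> \<le> Jn"
    and cancel: "\<forall>r R. 0 < r \<longrightarrow> r < R \<longrightarrow>
       (LINT z:{z. r < norm z \<and> norm z \<le> R}|lborel. (J z * norm z powr (- real DIM('a) - 1)) *\<^sub>R z) = 0"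
  shows "\<bar>opLJ \<alpha> J f x\<bar> \<le> opLJ_const DIM('a) \<alpha> \<gamma> * Jn * (A0 * s powr - \<alpha> + A1 * s powr (1 - \<alpha>)
      + A1 powr \<gamma> * A2 powr (1 - \<gamma>) * s powr (2 - \<gamma> - \<alpha>)) * weight \<alpha> s x"
proof -
  define B where "B = opLJ_const DIM('a) \<alpha> \<gamma> * (A0 * s powr - \<alpha> + A1 * s powr (1 - \<alpha>)
      + A1 powr \<gamma> * A2 powr (1 - \<gamma>) * s powr (2 - \<gamma> - \<alpha>)) * weight \<alpha> s x"
  define \<Psi> where "\<Psi> z = increment x z * J z * norm z powr (- real DIM('a) - \<alpha>)" for z
  have Jn: "0 \<le> Jn" using J(2)[of 0] by simp
  have B: "0 \<le> B"
    unfolding B_def using opLJ_const_pos[OF alpha_pos \<gamma>, of "DIM('a)"] bounds_nonneg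
    by (auto simp: weight_nonneg)
  have [measurable]: "J \<in> borel_measurable borel" using J(1) by simp
  have [measurable]: "\<Psi> \<in> borel_measurable borel" unfolding \<Psi>_def by measurable
  have \<Psi>_le: "(\<integral>\<^sup>+ z. norm (\<Psi> z) \<partial>lborel) \<le> Jn * B"
  proof -
    have "(\<integral>\<^sup>+ z. norm (\<Psi> z) \<partial>lborel)
        \<le> (\<integral>\<^sup>+ z. ennreal Jn * (\<bar>increment x z\<bar> * norm z powr (- real DIM('a) - \<alpha>)) \<partial>lborel)"
    proof (rule nn_integral_mono)
      fix z :: 'a
      have "norm (\<Psi> z) \<le> Jn * (\<bar>increment x z\<bar> * norm z powr (- real DIM('a) - \<alpha>))"
        unfolding \<Psi>_def using J(2)[of z] by (simp add: abs_mult mult_right_mono mult_left_mono mult_ac)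
      then show "ennreal (norm (\<Psi> z)) \<le> ennreal Jn * (\<bar>increment x z\<bar> * norm z powr (- real DIM('a) - \<alpha>))"
        using Jn by (simp add: ennreal_leI flip: ennreal_mult)
    qed
    also have "\<dots> = ennreal Jn * (\<integral>\<^sup>+ z. \<bar>increment x z\<bar> * norm z powr (- real DIM('a) - \<alpha>) \<partial>lborel)"
      by (rule nn_integral_cmult) measurable
    also have "\<dots> \<le> ennreal Jn * B"
      unfolding B_def by (intro mult_left_mono nn_integral_increment_le[OF \<gamma> dim]) auto
    finally show ?thesis using Jn B by (simp add: ennreal_mult)
  qed
  have \<Psi>_integrable: "integrable lborel \<Psi>"
    by (rule integrableI_bounded) (use \<Psi>_le in \<open>auto intro: le_less_trans\<close>)
  have "opLJ \<alpha> J f x = (LINT z|lborel. \<Psi> z)"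
    unfolding \<Psi>_def increment_def
    by (rule opLJ_eq_integral_compensator[OF alpha_pos \<alpha> s_pos J cancel has_derivative_f])
       (use \<Psi>_integrable in \<open>simp add: \<Psi>_def[abs_def] increment_def\<close>)
  also have "\<bar>\<dots>\<bar> \<le> Jn * B"
    using order_trans[OF integral_norm_bound_ennreal[OF \<Psi>_integrable] \<Psi>_le] Jn B
    by (simp add: ennreal_le_iff)
  finally show ?thesis unfolding B_def by (simp add: mult_ac)
qed

end

lemma sqrt_coefficients_eq:
  fixes t C0 C1 C2 :: real
  assumes t: "0 < t" and C: "0 \<le> C1" "0 \<le> C2"
  shows "C0 * sqrt t powr (\<alpha> - \<beta>0) * sqrt t powr - \<alpha> + C1 * sqrt t powr (\<alpha> - \<beta>1 - 1) * sqrt t powr (1 - \<alpha>)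
      + (C1 * sqrt t powr (\<alpha> - \<beta>1 - 1)) powr \<gamma> * (C2 * sqrt t powr (\<alpha> - \<beta>2 - 2)) powr (1 - \<gamma>)
        * sqrt t powr (2 - \<gamma> - \<alpha>)
    = C0 * t powr (- \<beta>0 / 2) + C1 * t powr (- \<beta>1 / 2)
      + C1 powr \<gamma> * C2 powr (1 - \<gamma>) * t powr (- (\<gamma> * \<beta>1 + (1 - \<gamma>) * \<beta>2) / 2)"
proof -
  have s: "0 < sqrt t" using t by simp
  have "\<gamma> * (\<alpha> - \<beta>1 - 1) + (1 - \<gamma>) * (\<alpha> - \<beta>2 - 2) + (2 - \<gamma> - \<alpha>) = - (\<gamma> * \<beta>1 + (1 - \<gamma>) * \<beta>2)"
    by (simp add: algebra_simps)
  then have e2: "(C1 * sqrt t powr (\<alpha> - \<beta>1 - 1)) powr \<gamma> * (C2 * sqrt t powr (\<alpha> - \<beta>2 - 2)) powr (1 - \<gamma>)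
      * sqrt t powr (2 - \<gamma> - \<alpha>) = C1 powr \<gamma> * C2 powr (1 - \<gamma>) * sqrt t powr (- (\<gamma> * \<beta>1 + (1 - \<gamma>) * \<beta>2))"
    by (simp only: powr_interpolation_scaling[OF s C])
  have e0: "C0 * sqrt t powr (\<alpha> - \<beta>0) * sqrt t powr - \<alpha> = C0 * sqrt t powr - \<beta>0"
    and e1: "C1 * sqrt t powr (\<alpha> - \<beta>1 - 1) * sqrt t powr (1 - \<alpha>) = C1 * sqrt t powr - \<beta>1"
    by (simp_all add: mult.assoc flip: powr_add)
  show ?thesis unfolding e0 e1 e2 using t by (simp add: sqrt_powr)
qed

theorem lemma2p2:
  fixes \<alpha> \<gamma> :: real
  assumes "DIM('a::euclidean_space) \<ge> 2"
    and "0 < \<alpha>" and "\<alpha> < 2"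
    and "0 \<le> \<gamma>" and "\<gamma> < min (2 - \<alpha>) 1"
  shows "\<exists>C>0. \<forall>(J :: 'a \<Rightarrow> real) (T :: real) (G :: real \<Rightarrow> 'a \<Rightarrow> real)
      (G' :: real \<Rightarrow> 'a \<Rightarrow> ('a \<Rightarrow>\<^sub>L real)) (G'' :: real \<Rightarrow> 'a \<Rightarrow> ('a \<Rightarrow>\<^sub>L ('a \<Rightarrow>\<^sub>L real)))
      (C0 :: real) C1 C2 (\<beta>0 :: real) \<beta>1 \<beta>2.
      J \<in> borel_measurable lborel \<and> bounded (range J) \<and>
      (\<forall>r R. 0 < r \<longrightarrow> r < R \<longrightarrow>
         (LINT z:{z. r < norm z \<and> norm z \<le> R}|lborel.
            (J z * norm z powr (- real DIM('a) - 1)) *\<^sub>R z) = 0) \<and>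
      0 < T \<and>
      (\<forall>t\<in>{0<..<T}. (\<forall>x. (G t has_derivative blinfun_apply (G' t x)) (at x)) \<and>
                     (\<forall>x. (G' t has_derivative blinfun_apply (G'' t x)) (at x)) \<and>
                     continuous_on UNIV (G'' t)) \<and>
      0 < C0 \<and> 0 < C1 \<and> 0 < C2 \<and> 0 \<le> \<beta>0 \<and> 0 \<le> \<beta>1 \<and> 0 \<le> \<beta>2 \<and>
      (\<forall>t\<in>{0<..<T}. \<forall>x. \<bar>G t x\<bar> \<le> C0 * eta \<alpha> (\<alpha> - \<beta>0) t x) \<and>
      (\<forall>t\<in>{0<..<T}. \<forall>x. norm (G' t x) \<le> C1 * eta \<alpha> (\<alpha> - \<beta>1 - 1) t x) \<and>
      (\<forall>t\<in>{0<..<T}. \<forall>x. norm (G'' t x) \<le> C2 * eta \<alpha> (\<alpha> - \<beta>2 - 2) t x)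
      \<longrightarrow>
      (\<forall>t\<in>{0<..<T}. \<forall>x.
         \<bar>opLJ \<alpha> J (G t) x\<bar> \<le> C * supnorm J *
           (C0 * t powr (- \<beta>0 / 2) + C1 * t powr (- \<beta>1 / 2)
            + C1 powr \<gamma> * C2 powr (1 - \<gamma>) * t powr (- (\<gamma> * \<beta>1 + (1 - \<gamma>) * \<beta>2) / 2))
           * eta \<alpha> 0 t x)"
proof (intro exI[of _ "opLJ_const DIM('a) \<alpha> \<gamma>"] conjI allI impI ballI, goal_cases)
  case 1
  show ?case using assms by (intro opLJ_const_pos) auto
next
  case (2 J T G G' G'' C0 C1 C2 \<beta>0 \<beta>1 \<beta>2 t x)
  then have t: "0 < t" by simp
  define s where "s = sqrt t"
  have s: "0 < s" using t by (simp add: s_def)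
  have eta: "eta \<alpha> c t y = s powr c * weight \<alpha> s y" for c y
    unfolding s_def by (rule eta_eq_weight[OF t])
  have "\<bar>G t y\<bar> \<le> C0 * eta \<alpha> (\<alpha> - \<beta>0) t y" "norm (G' t y) \<le> C1 * eta \<alpha> (\<alpha> - \<beta>1 - 1) t y"
    "norm (G'' t y) \<le> C2 * eta \<alpha> (\<alpha> - \<beta>2 - 2) t y" for y
    using 2 by auto
  then interpret weighted_C2 \<alpha> s "C0 * s powr (\<alpha> - \<beta>0)" "C1 * s powr (\<alpha> - \<beta>1 - 1)"
    "C2 * s powr (\<alpha> - \<beta>2 - 2)" "G t" "G' t" "G'' t"
    using 2 assms(2) s by unfold_locales (auto simp: eta mult.assoc)
  have "\<bar>opLJ \<alpha> J (G t) x\<bar> \<le> opLJ_const DIM('a) \<alpha> \<gamma> * supnorm J *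
      (C0 * s powr (\<alpha> - \<beta>0) * s powr - \<alpha> + C1 * s powr (\<alpha> - \<beta>1 - 1) * s powr (1 - \<alpha>)
       + (C1 * s powr (\<alpha> - \<beta>1 - 1)) powr \<gamma> * (C2 * s powr (\<alpha> - \<beta>2 - 2)) powr (1 - \<gamma>) * s powr (2 - \<gamma> - \<alpha>))
      * weight \<alpha> s x"
    using 2 assms abs_le_supnorm by (intro abs_opLJ_le) auto
  also have "\<dots> = opLJ_const DIM('a) \<alpha> \<gamma> * supnorm J *
           (C0 * t powr (- \<beta>0 / 2) + C1 * t powr (- \<beta>1 / 2)
            + C1 powr \<gamma> * C2 powr (1 - \<gamma>) * t powr (- (\<gamma> * \<beta>1 + (1 - \<gamma>) * \<beta>2) / 2))
           * eta \<alpha> 0 t x"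
    using 2 s unfolding s_def by (simp add: sqrt_coefficients_eq eta_eq_weight[OF t])
  finally show ?case .
qed

end
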